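(* Let $\tau\in[0,1]$, let $P$ be a real symmetric positive semidefinite $n\times n$ matrix, and let $\theta$ satisfy $0<\theta<((1-\tau)\|P\|)^{-1}$ (interpreted as $\theta>0$ when $\tau=1$ or $P=0$). Then: (1) the function $\vartheta\mapsto\gamma_\tau(P,\vartheta)$ is monotone increasing on $\{\vartheta>0:\ \vartheta(1-\tau)\|P\|<1\}$; (2) if $Q$ is a symmetric positive semidefinite $n\times n$ matrix with $P\ge Q$, then $\gamma_\tau(P,\theta)\ge\gamma_\tau(Q,\theta)$; (3) if $P\neq0$, then $\gamma_\tau(P,\theta)>0$.
   Context: $\|\cdot\|$ is the spectral norm; $\ge$ the Loewner order. For $P$ positive semidefinite, $L_P$ is any matrix with $P=L_PL_P^T$; matrix powers and $\exp$ of symmetric matrices are defined through eigendecomposition. The function $\gamma_\tau$: for positive semidefinite $P$ and $\theta\ge0$ with $\theta(1-\tau)\|P\|<1$, $\gamma_0(P,\theta)=-\log\det((I_n-\theta P)^{-1})+\mathrm{tr}((I_n-\theta P)^{-1}-I_n)$; for $0<\tau<1$, $\gamma_\tau(P,\theta)=\mathrm{tr}\big(-\frac{1}{\tau(1-\tau)}(I_n-\theta(1-\tau)L_P^TL_P)^{\frac{\tau}{\tau-1}}+\frac1{1-\tau}(I_n-\theta(1-\tau)L_P^TL_P)^{\frac{1}{\tau-1}}+\frac1\tau I_n\big)$; $\gamma_1(P,\theta)=\mathrm{tr}(\exp(\theta L_P^TL_P)(\theta L_P^TL_P-I_n)+I_n)$. (The value does not depend on the choice of $L_P$.) *)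

theory Defs
  imports "HOL-Analysis.Analysis"
begin

definition psd :: "real^'n^'n \<Rightarrow> bool" where
  "psd A \<longleftrightarrow> transpose A = A \<and> (\<forall>x. 0 \<le> x \<bullet> (A *v x))"

definition loewner_ge :: "real^'n^'n \<Rightarrow> real^'n^'n \<Rightarrow> bool" where
  "loewner_ge A B \<longleftrightarrow> psd (A - B)"

definition spec_norm :: "real^'n^'n \<Rightarrow> real" where
  "spec_norm A = onorm (\<lambda>x. A *v x)"

definition diag_mat :: "real^'n \<Rightarrow> real^'n^'n" where
  "diag_mat d = (\<chi> i j. if i = j then d $ i else 0)"

definition mat_fun :: "(real \<Rightarrow> real) \<Rightarrow> real^'n^'n \<Rightarrow> real^'n^'n" where
  "mat_fun f A = (SOME B. \<exists>U d. orthogonal_matrix U \<and> A = U ** diag_mat d ** transpose U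
                     \<and> B = U ** diag_mat (\<chi> i. f (d $ i)) ** transpose U)"

text \<open>A factor L_P with P = L_P L_P^T (the value of gamma does not depend on the choice).\<close>
definition factor :: "real^'n^'n \<Rightarrow> real^'n^'n" where
  "factor P = (SOME L. P = L ** transpose L)"

definition gamma :: "real \<Rightarrow> real^'n^'n \<Rightarrow> real \<Rightarrow> real" where
  "gamma \<tau> P \<theta> =
    (if \<tau> = 0 then
       - ln (det (matrix_inv (mat 1 - \<theta> *\<^sub>R P))) + trace (matrix_inv (mat 1 - \<theta> *\<^sub>R P) - mat 1)
     else if \<tau> < 1 then
       (let L = factor P; M = mat 1 - (\<theta> * (1 - \<tau>)) *\<^sub>R (transpose L ** L) in
        trace (- (1 / (\<tau> * (1 - \<tau>))) *\<^sub>R mat_fun (\<lambda>x. x powr (\<tau> / (\<tau> - 1))) M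
               + (1 / (1 - \<tau>)) *\<^sub>R mat_fun (\<lambda>x. x powr (1 / (\<tau> - 1))) M
               + (1 / \<tau>) *\<^sub>R mat 1))
     else
       (let L = factor P; K = \<theta> *\<^sub>R (transpose L ** L) in
        trace (mat_fun exp K ** (K - mat 1) + mat 1)))"

end

theory Submission
  imports Defs
begin

(* Diagonalising P = U diag(p) U^T turns gamma tau P theta into sum_j h(theta p_j), where
   h = gamma_scalar tau vanishes at 0 and has derivative x * w(x) with w positive and increasing,
   so h is increasing and convex on its domain. For tau > 0 the definition goes through an
   arbitrary factor L with P = L L^T and uses L^T L, whose nonzero eigenvalues are those of P.
   Monotonicity in theta and positivity then hold termwise. For P >= Q with eigenbases U of P
   and V of Q, the matrix W = V^T U is orthogonal and q_i <= (V^T P V)_ii = sum_j W_ij^2 p_j;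
   since the weights W_ij^2 form a doubly stochastic matrix, monotonicity of h and Jensen's
   inequality give sum_i h(theta q_i) <= sum_j h(theta p_j). *)

lemma matrix_mul_diag_mat_nth: "(A ** diag_mat d) $ i $ j = A $ i $ j * d $ j"
  by (simp add: matrix_matrix_mult_def diag_mat_def if_distrib cong: if_cong)

lemma diag_mat_matrix_mul_nth: "(diag_mat d ** A) $ i $ j = d $ i * A $ i $ j"
  by (simp add: matrix_matrix_mult_def diag_mat_def if_distrib if_distribR cong del: if_weak_cong)

lemma diag_mat_mul_diag_mat: "diag_mat a ** diag_mat b = diag_mat (\<chi> i. a $ i * b $ i)"
  by (simp add: vec_eq_iff matrix_mul_diag_mat_nth) (simp add: diag_mat_def)

lemma transpose_diag_mat [simp]: "transpose (diag_mat d) = diag_mat d"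
  by (simp add: diag_mat_def transpose_def vec_eq_iff)

lemma mat_1_eq_diag_mat: "mat 1 = diag_mat (\<chi> i. 1)"
  by (simp add: mat_def diag_mat_def vec_eq_iff)

lemma orthogonal_matrix_cancel_left:
  "orthogonal_matrix U \<Longrightarrow> transpose U ** (U ** X) = X"
  "orthogonal_matrix U \<Longrightarrow> U ** (transpose U ** X) = X"
  by (simp_all add: orthogonal_matrix_def matrix_mul_assoc)

lemma orthogonal_matrix_column_sum_squares:
  fixes W :: "real^'n^'n"
  assumes "orthogonal_matrix W"
  shows "(\<Sum>i\<in>UNIV. (W $ i $ j)\<^sup>2) = 1"
  using assms
  by (simp add: orthogonal_matrix_orthonormal_columns norm_eq_1 inner_vec_def column_def power2_eq_square)

lemma orthogonal_matrix_row_sum_squares: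
  fixes W :: "real^'n^'n"
  assumes "orthogonal_matrix W"
  shows "(\<Sum>j\<in>UNIV. (W $ i $ j)\<^sup>2) = 1"
  using orthogonal_matrix_column_sum_squares[of "transpose W" i] assms
  unfolding orthogonal_matrix_transpose by (simp add: transpose_def)

lemma trace_scaleR: "trace (c *\<^sub>R A) = c * trace (A :: real^'n^'n)"
  by (simp add: trace_def sum_distrib_left)

lemma trace_orthogonal_conj:
  assumes "orthogonal_matrix U"
  shows "trace (U ** diag_mat d ** transpose U) = (\<Sum>i\<in>UNIV. d $ i)"
proof -
  have "trace (U ** diag_mat d ** transpose U) = trace (diag_mat d ** transpose U ** U)"
    by (metis matrix_mul_assoc trace_mul_sym)
  also have "\<dots> = trace (diag_mat d)"
    using assms by (simp add: matrix_mul_assoc[symmetric] orthogonal_matrix_def)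
  finally show ?thesis by (simp add: trace_def diag_mat_def)
qed

lemma det_orthogonal_conj:
  assumes "orthogonal_matrix U"
  shows "det (U ** diag_mat d ** transpose U) = (\<Prod>i\<in>UNIV. d $ i)"
proof -
  have "det U * det U = 1"
    using det_mul[of "transpose U" U] assms by (simp add: orthogonal_matrix_def)
  moreover have "det (diag_mat d) = (\<Prod>i\<in>UNIV. d $ i)"
    by (subst det_diagonal) (auto simp: diag_mat_def)
  ultimately show ?thesis by (simp add: det_mul)
qed

lemma orthogonal_conj_mul:
  assumes "orthogonal_matrix U"
  shows "(U ** diag_mat a ** transpose U) ** (U ** diag_mat b ** transpose U)
       = U ** diag_mat (\<chi> i. a $ i * b $ i) ** transpose U"
  using assms
  by (simp add: matrix_mul_assoc[symmetric] orthogonal_matrix_cancel_left diag_mat_mul_diag_mat[symmetric])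

lemma matrix_inv_unique:
  fixes A B :: "real^'n^'n"
  assumes "A ** B = mat 1" "B ** A = mat 1"
  shows "matrix_inv A = B"
proof -
  have "A ** matrix_inv A = mat 1 \<and> matrix_inv A ** A = mat 1"
    unfolding matrix_inv_def by (rule someI[of _ B]) (use assms in simp)
  then have "matrix_inv A = matrix_inv A ** (A ** B)" using assms by simp
  also have "\<dots> = (matrix_inv A ** A) ** B" by (simp add: matrix_mul_assoc)
  also have "\<dots> = B" using \<open>_ \<and> _\<close> by simp
  finally show ?thesis .
qed

lemma matrix_inv_orthogonal_conj:
  assumes "orthogonal_matrix U" "\<And>i. d $ i \<noteq> 0"
  shows "matrix_inv (U ** diag_mat d ** transpose U) = U ** diag_mat (\<chi> i. 1 / d $ i) ** transpose U"
proof (rule matrix_inv_unique)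
  have "U ** diag_mat (\<chi> i. 1) ** transpose U = mat 1"
    using assms(1) by (simp add: mat_1_eq_diag_mat[symmetric] orthogonal_matrix_def)
  then show "(U ** diag_mat d ** transpose U) ** (U ** diag_mat (\<chi> i. 1 / d $ i) ** transpose U) = mat 1"
    and "(U ** diag_mat (\<chi> i. 1 / d $ i) ** transpose U) ** (U ** diag_mat d ** transpose U) = mat 1"
    using assms by (simp_all add: orthogonal_conj_mul)
qed

lemma orthogonal_conj_nth:
  "(U ** diag_mat d ** transpose U) $ i $ j = (\<Sum>k\<in>UNIV. U $ i $ k * d $ k * U $ j $ k)"
  by (simp add: matrix_matrix_mult_def[of "U ** diag_mat d"] transpose_def matrix_mul_diag_mat_nth)

lemma transpose_mul_mul_diag_nth:
  "(transpose V ** M ** V) $ i $ i = column i V \<bullet> (M *v column i V)"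
  by (simp add: matrix_matrix_mult_def transpose_def inner_vec_def column_def matrix_vector_mult_def
      sum_distrib_left sum_distrib_right) (subst sum.swap, simp add: mult_ac)

section \<open>The spectral theorem for real symmetric matrices\<close>

definition spectral_decomp :: "real^'n^'n \<Rightarrow> real^'n \<Rightarrow> real^'n^'n \<Rightarrow> bool" where
  "spectral_decomp U d A \<longleftrightarrow> orthogonal_matrix U \<and> A = U ** diag_mat d ** transpose U"

lemma symmetric_matrix_inner_swap:
  fixes A :: "real^'n^'n"
  assumes "transpose A = A"
  shows "x \<bullet> (A *v y) = (A *v x) \<bullet> y"
  by (metis assms dot_lmul_matrix transpose_transpose vector_transpose_matrix)

lemma eq_0_if_quadratic_nonpos:
  fixes c d :: real
  assumes "\<And>t. 2 * t * c + t\<^sup>2 * d \<le> 0" "0 \<le> c"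
  shows "c = 0"
proof (rule ccontr)
  assume "c \<noteq> 0"
  with assms(2) have c: "0 < c" by simp
  define t where "t = c / (\<bar>d\<bar> + 1)"
  have t: "0 < t" using c by (simp add: t_def add_pos_nonneg)
  have "t * \<bar>d\<bar> < c"
    using c by (simp add: t_def field_simps)
  then have "t * (t * \<bar>d\<bar>) < t * c" using t by simp
  moreover have "- (t * (t * \<bar>d\<bar>)) \<le> t\<^sup>2 * d"
    using mult_left_mono[OF abs_ge_minus_self[of d], of "t * t"] by (simp add: power2_eq_square)
  ultimately have "0 < 2 * t * c + t\<^sup>2 * d" using mult_pos_pos[OF t c] by linarith
  with assms(1)[of t] show False by simp
qed

lemma rayleigh_quotient_max_exists:
  fixes A :: "real^'n^'n"
  assumes "subspace S" "x0 \<in> S" "x0 \<noteq> 0"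
  obtains v where "v \<in> S" "norm v = 1"
    "\<And>x. x \<in> S \<Longrightarrow> x \<bullet> (A *v x) \<le> (v \<bullet> (A *v v)) * (x \<bullet> x)"
proof -
  define K where "K = S \<inter> sphere 0 1"
  have "compact K"
    unfolding K_def by (intro closed_Int_compact closed_subspace assms(1) compact_sphere)
  moreover have "(1 / norm x0) *\<^sub>R x0 \<in> K"
    using assms by (simp add: K_def subspace_scale)
  moreover have "continuous_on K (\<lambda>x. x \<bullet> (A *v x))"
    by (intro continuous_intros linear_continuous_on matrix_vector_mul_bounded_linear)
  ultimately obtain v where v: "v \<in> K"
    and vmax: "\<And>y. y \<in> K \<Longrightarrow> y \<bullet> (A *v y) \<le> v \<bullet> (A *v v)"
    using continuous_attains_sup by (metis empty_iff)
  have "x \<bullet> (A *v x) \<le> (v \<bullet> (A *v v)) * (x \<bullet> x)" if "x \<in> S" for x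
  proof (cases "x = 0")
    case False
    then have "(1 / norm x) *\<^sub>R x \<in> K"
      using that assms(1) by (simp add: K_def subspace_scale)
    from vmax[OF this] False show ?thesis
      by (simp add: matrix_vector_mult_scaleR divide_le_eq power2_norm_eq_inner[symmetric]
          power2_eq_square)
  qed simp
  then show ?thesis using v by (intro that) (auto simp: K_def)
qed

lemma rayleigh_quotient_max_eigenvector:
  fixes A :: "real^'n^'n"
  assumes sym: "transpose A = A" and S: "subspace S" and inv: "\<And>x. x \<in> S \<Longrightarrow> A *v x \<in> S"
    and v: "v \<in> S" "v \<bullet> v = 1"
    and max: "\<And>x. x \<in> S \<Longrightarrow> x \<bullet> (A *v x) \<le> (v \<bullet> (A *v v)) * (x \<bullet> x)"
  shows "A *v v = (v \<bullet> (A *v v)) *\<^sub>R v"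
proof -
  define l where "l = v \<bullet> (A *v v)"
  define w where "w = A *v v - l *\<^sub>R v"
  have w: "w \<in> S" using v inv S by (simp add: w_def subspace_diff subspace_scale)
  have vw: "v \<bullet> w = 0" and wv: "w \<bullet> v = 0"
    by (simp_all add: w_def inner_diff_right inner_diff_left v l_def inner_commute)
  have "w \<bullet> w = w \<bullet> (A *v v) - l * (w \<bullet> v)" by (simp add: w_def inner_diff_right)
  then have wAv: "w \<bullet> (A *v v) = w \<bullet> w" and vAw: "v \<bullet> (A *v w) = w \<bullet> w"
    using wv symmetric_matrix_inner_swap[OF sym, of v w] by (simp_all add: inner_commute)
  \<comment> \<open>maximality of the Rayleigh quotient at v, tested at v + t w\<close>
  have "2 * t * (w \<bullet> w) + t\<^sup>2 * (w \<bullet> (A *v w) - l * (w \<bullet> w)) \<le> 0" for t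
  proof -
    have "v + t *\<^sub>R w \<in> S" using v w S by (simp add: subspace_add subspace_scale)
    from max[OF this] show ?thesis
      by (simp add: matrix_vector_right_distrib matrix_vector_mult_scaleR inner_add_left
          inner_add_right wAv vAw vw wv v(2) l_def[symmetric] power2_eq_square algebra_simps)
  qed
  then have "w \<bullet> w = 0" by (rule eq_0_if_quadratic_nonpos) simp
  then show ?thesis by (simp add: w_def l_def)
qed

lemma symmetric_matrix_invariant_subspace_eigenvector:
  fixes A :: "real^'n^'n"
  assumes sym: "transpose A = A" and S: "subspace S" "\<forall>x\<in>S. A *v x \<in> S" and "S \<noteq> {0}"
  obtains v where "v \<in> S" "norm v = 1" "A *v v = (v \<bullet> (A *v v)) *\<^sub>R v"
proof -
  obtain x0 where "x0 \<in> S" "x0 \<noteq> 0" using subspace_0[OF S(1)] assms(4) by auto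
  then obtain v where v: "v \<in> S" "norm v = 1"
    and max: "\<And>x. x \<in> S \<Longrightarrow> x \<bullet> (A *v x) \<le> (v \<bullet> (A *v v)) * (x \<bullet> x)"
    using rayleigh_quotient_max_exists[OF S(1)] by blast
  have "v \<bullet> v = 1" using v by (simp add: norm_eq_1)
  with v S(2) show ?thesis
    using rayleigh_quotient_max_eigenvector[OF sym S(1) _ v(1) _ max] that by blast
qed

lemma invariant_subspace_orthogonal_complement:
  fixes A :: "real^'n^'n"
  assumes sym: "transpose A = A" and S: "subspace S" "\<forall>x\<in>S. A *v x \<in> S"
    and v: "v \<in> S" "norm v = 1" "A *v v = (v \<bullet> (A *v v)) *\<^sub>R v"
  defines "S' \<equiv> {x \<in> S. v \<bullet> x = 0}"
  shows "subspace S'" "\<forall>x\<in>S'. A *v x \<in> S'" "dim S' < dim S"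
    and "x \<in> S \<Longrightarrow> x - (v \<bullet> x) *\<^sub>R v \<in> S'"
proof -
  have vv: "v \<bullet> v = 1" using v(2) by (simp add: norm_eq_1)
  show sub': "subspace S'"
    using S(1) unfolding S'_def subspace_def by (auto simp: inner_add_right)
  show "\<forall>x\<in>S'. A *v x \<in> S'"
  proof
    fix x assume x: "x \<in> S'"
    have "v \<bullet> (A *v x) = (v \<bullet> (A *v v)) * (v \<bullet> x)"
      by (subst symmetric_matrix_inner_swap[OF sym], subst v(3)) simp
    with x S(2) show "A *v x \<in> S'" by (simp add: S'_def)
  qed
  have "v \<notin> S'" using vv by (simp add: S'_def)
  then have "S' \<subset> S" using v(1) unfolding S'_def by blast
  moreover have "span S' = S'" "span S = S"
    using sub' S(1) by (simp_all add: span_eq_iff)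
  ultimately show "dim S' < dim S"
    using dim_psubset by metis
  show "x - (v \<bullet> x) *\<^sub>R v \<in> S'" if "x \<in> S"
    using that v(1) S(1) vv by (simp add: S'_def subspace_diff subspace_scale inner_diff_right)
qed

lemma symmetric_matrix_orthonormal_eigenbasis:
  fixes A :: "real^'n^'n"
  assumes sym: "transpose A = A"
  shows "subspace S \<Longrightarrow> (\<forall>x\<in>S. A *v x \<in> S) \<Longrightarrow>
    \<exists>B. B \<subseteq> S \<and> pairwise orthogonal B \<and> (\<forall>x\<in>B. norm x = 1) \<and>
        (\<forall>x\<in>B. A *v x = (x \<bullet> (A *v x)) *\<^sub>R x) \<and> span B = S"
proof (induction "dim S" arbitrary: S rule: less_induct)
  case less
  show ?case
  proof (cases "S = {0}")
    case True
    then show ?thesis by (intro exI[of _ "{}"]) auto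
  next
    case False
    obtain v where v: "v \<in> S" "norm v = 1" "A *v v = (v \<bullet> (A *v v)) *\<^sub>R v"
      using symmetric_matrix_invariant_subspace_eigenvector[OF sym less.prems False] by blast
    define S' where "S' = {x \<in> S. v \<bullet> x = 0}"
    note S' = invariant_subspace_orthogonal_complement[OF sym less.prems v, folded S'_def]
    from less.hyps[OF S'(3,1,2)] obtain B' where
      B': "B' \<subseteq> S'" "pairwise orthogonal B'" "\<forall>x\<in>B'. norm x = 1"
          "\<forall>x\<in>B'. A *v x = (x \<bullet> (A *v x)) *\<^sub>R x" "span B' = S'" by blast
    have "S \<subseteq> span (insert v B')"
    proof
      fix x assume "x \<in> S"
      with S'(4) show "x \<in> span (insert v B')" unfolding span_breakdown_eq B'(5) by blast
    qed
    moreover have "insert v B' \<subseteq> S" using B'(1) v by (auto simp: S'_def)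
    ultimately have "span (insert v B') = S"
      using span_minimal[OF _ less.prems(1)] by blast
    moreover have "pairwise orthogonal (insert v B')"
      using B'(1,2) by (auto simp: pairwise_insert orthogonal_def S'_def inner_commute)
    ultimately show ?thesis
      using B'(3,4) \<open>insert v B' \<subseteq> S\<close> v by (intro exI[of _ "insert v B'"]) auto
  qed
qed

lemma symmetric_matrix_spectral_decomp:
  fixes A :: "real^'n^'n"
  assumes sym: "transpose A = A"
  obtains U d where "spectral_decomp U d A"
proof -
  obtain B where B: "pairwise orthogonal B" "\<forall>x\<in>B. norm x = 1"
        "\<forall>x\<in>B. A *v x = (x \<bullet> (A *v x)) *\<^sub>R x" "span B = UNIV"
    using symmetric_matrix_orthonormal_eigenbasis[OF sym, of UNIV] by auto
  have indep: "independent B"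
    using B(1,2) by (intro pairwise_orthogonal_independent) auto
  then have "finite B" using finiteI_independent by blast
  moreover have "card B = CARD('n)"
    using dim_span_eq_card_independent[OF indep] B(4) by simp
  ultimately have "\<exists>g. bij_betw g (UNIV::'n set) B"
    by (intro finite_same_card_bij) simp_all
  then obtain g where g: "bij_betw g (UNIV::'n set) B" ..
  then have gB: "g i \<in> B" and ginj: "g i = g j \<longleftrightarrow> i = j" for i j
    by (auto simp: bij_betw_def inj_def)
  define U :: "real^'n^'n" where "U = (\<chi> r c. g c $ r)"
  define d :: "real^'n" where "d = (\<chi> c. g c \<bullet> (A *v g c))"
  have "column i U = g i" for i by (simp add: U_def column_def vec_eq_iff)
  then have U: "orthogonal_matrix U"
    unfolding orthogonal_matrix_orthonormal_columns
    using B(1,2) gB ginj by (simp add: pairwise_def)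
  moreover have "A ** U = U ** diag_mat d"
  proof -
    have "A *v g c = d $ c *\<^sub>R g c" for c using B(3) gB[of c] by (simp add: d_def)
    then have "(A *v g c) $ r = d $ c * g c $ r" for r c by simp
    moreover have "(A ** U) $ r $ c = (A *v g c) $ r" for r c
      by (simp add: U_def matrix_matrix_mult_def matrix_vector_mult_def mult.commute)
    ultimately show ?thesis
      by (simp add: vec_eq_iff matrix_mul_diag_mat_nth U_def mult.commute)
  qed
  then have "A = U ** diag_mat d ** transpose U"
    using U by (metis matrix_mul_assoc matrix_mul_rid orthogonal_matrix_def)
  with U show ?thesis by (intro that) (simp add: spectral_decomp_def)
qed

lemma spectral_decomp_orthogonal: "spectral_decomp U d A \<Longrightarrow> orthogonal_matrix U"
  by (simp add: spectral_decomp_def)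

lemma spectral_decomp_diag: "spectral_decomp U d A \<Longrightarrow> transpose U ** A ** U = diag_mat d"
  by (simp add: spectral_decomp_def matrix_mul_assoc[symmetric] orthogonal_matrix_cancel_left)
    (simp add: matrix_mul_assoc orthogonal_matrix_def)

lemma spectral_decomp_eigenvalue:
  "spectral_decomp U d A \<Longrightarrow> d $ j = column j U \<bullet> (A *v column j U)"
  using spectral_decomp_diag[of U d A] transpose_mul_mul_diag_nth[of U A j]
  by (simp add: diag_mat_def)

lemma spectral_decomp_eigenvector:
  assumes "spectral_decomp U d A"
  shows "A *v column j U = d $ j *\<^sub>R column j U"
proof -
  have "A ** U = U ** diag_mat d"
    using assms by (simp add: spectral_decomp_def matrix_mul_assoc[symmetric] orthogonal_matrix_def)
  moreover have "(A *v column j U) $ r = (A ** U) $ r $ j" for r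
    by (simp add: column_def matrix_vector_mult_def matrix_matrix_mult_def)
  ultimately show ?thesis by (simp add: vec_eq_iff matrix_mul_diag_mat_nth column_def mult.commute)
qed

lemma spectral_decomp_psd_nonneg: "spectral_decomp U d A \<Longrightarrow> psd A \<Longrightarrow> 0 \<le> d $ j"
  using spectral_decomp_eigenvalue[of U d A j] by (simp add: psd_def)

lemma spectral_decomp_abs_le_spec_norm:
  assumes "spectral_decomp U d A"
  shows "\<bar>d $ j\<bar> \<le> spec_norm A"
proof -
  have "norm (column j U) = 1"
    using spectral_decomp_orthogonal[OF assms] by (simp add: orthogonal_matrix_orthonormal_columns)
  moreover have "norm (A *v column j U) \<le> onorm ((*v) A) * norm (column j U)"
    by (rule onorm) simp
  ultimately show ?thesis
    using spectral_decomp_eigenvector[OF assms, of j] by (simp add: spec_norm_def)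
qed

lemma spectral_decomp_affine:
  assumes "spectral_decomp U d A"
  shows "spectral_decomp U (\<chi> i. a + b * d $ i) (a *\<^sub>R mat 1 + b *\<^sub>R A)"
proof -
  have U: "orthogonal_matrix U" using assms by (rule spectral_decomp_orthogonal)
  have I: "mat 1 = U ** diag_mat (\<chi> i. 1) ** transpose U"
    using U by (simp add: mat_1_eq_diag_mat[symmetric] orthogonal_matrix_def)
  have "(a *\<^sub>R mat 1 + b *\<^sub>R A) $ i $ j = (U ** diag_mat (\<chi> i. a + b * d $ i) ** transpose U) $ i $ j"
    for i j
    using assms unfolding spectral_decomp_def
    by (subst I) (simp add: orthogonal_conj_nth sum_distrib_left sum.distrib[symmetric] algebra_simps)
  then show ?thesis using U by (simp add: spectral_decomp_def vec_eq_iff)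
qed

(* An entry W i j \<noteq> 0 forces a j = b i. *)
lemma intertwining_weighted_sum_eq:
  fixes W :: "real^'n^'n" and g :: "real \<Rightarrow> real"
  assumes "W ** diag_mat a = diag_mat b ** W"
  shows "(\<Sum>j\<in>UNIV. (\<Sum>i\<in>UNIV. (W $ i $ j)\<^sup>2) * g (a $ j))
       = (\<Sum>i\<in>UNIV. (\<Sum>j\<in>UNIV. (W $ i $ j)\<^sup>2) * g (b $ i))"
proof -
  have transport: "(W $ i $ j)\<^sup>2 * g (a $ j) = (W $ i $ j)\<^sup>2 * g (b $ i)" for i j
  proof (cases "W $ i $ j = 0")
    case False
    have "W $ i $ j * a $ j = b $ i * W $ i $ j"
      using arg_cong[OF assms, of "\<lambda>M. M $ i $ j"]
      by (simp add: matrix_mul_diag_mat_nth diag_mat_matrix_mul_nth)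
    with False show ?thesis by simp
  qed simp
  have "(\<Sum>j\<in>UNIV. (\<Sum>i\<in>UNIV. (W $ i $ j)\<^sup>2) * g (a $ j))
      = (\<Sum>j\<in>UNIV. \<Sum>i\<in>UNIV. (W $ i $ j)\<^sup>2 * g (b $ i))"
    by (simp add: sum_distrib_right transport)
  also have "\<dots> = (\<Sum>i\<in>UNIV. (\<Sum>j\<in>UNIV. (W $ i $ j)\<^sup>2) * g (b $ i))"
    by (subst sum.swap) (simp add: sum_distrib_right)
  finally show ?thesis .
qed

lemma spectral_decomp_sum_eq:
  fixes g :: "real \<Rightarrow> real"
  assumes "spectral_decomp U a A" "spectral_decomp V b A"
  shows "(\<Sum>j\<in>UNIV. g (a $ j)) = (\<Sum>i\<in>UNIV. g (b $ i))"
proof -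
  define W where "W = transpose V ** U"
  have U: "orthogonal_matrix U" and V: "orthogonal_matrix V"
    using assms by (simp_all add: spectral_decomp_orthogonal)
  then have W: "orthogonal_matrix W" by (simp add: W_def orthogonal_matrix_mul)
  have "W ** diag_mat a = transpose V ** A ** U"
    using assms(1) U by (simp add: spectral_decomp_def W_def matrix_mul_assoc[symmetric])
      (simp add: matrix_mul_assoc orthogonal_matrix_def)
  also have "\<dots> = diag_mat b ** W"
    using assms(2) V by (simp add: spectral_decomp_def W_def matrix_mul_assoc[symmetric]
        orthogonal_matrix_cancel_left)
  finally show ?thesis
    using intertwining_weighted_sum_eq[of W a b g]
    by (simp add: orthogonal_matrix_row_sum_squares[OF W] orthogonal_matrix_column_sum_squares[OF W])
qed

(* W = V^T L U intertwines diag a = W^T W and diag b = W W^T; writing h x = x * (h x / x),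
   which needs h 0 = 0, the squared entries of W become the eigenvalue weights. *)
lemma spectral_decomp_sum_transpose_mul:
  fixes L :: "real^'n^'n" and h :: "real \<Rightarrow> real"
  assumes "spectral_decomp U a (transpose L ** L)" "spectral_decomp V b (L ** transpose L)"
    and "h 0 = 0"
  shows "(\<Sum>j\<in>UNIV. h (a $ j)) = (\<Sum>i\<in>UNIV. h (b $ i))"
proof -
  define W where "W = transpose V ** L ** U"
  have "transpose W ** W = transpose U ** (transpose L ** L) ** U"
    using spectral_decomp_orthogonal[OF assms(2)]
    by (simp add: W_def matrix_transpose_mul matrix_mul_assoc[symmetric] orthogonal_matrix_cancel_left)
  then have c: "transpose W ** W = diag_mat a" using spectral_decomp_diag[OF assms(1)] by simp
  have "W ** transpose W = transpose V ** (L ** transpose L) ** V"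
    using spectral_decomp_orthogonal[OF assms(1)]
    by (simp add: W_def matrix_transpose_mul matrix_mul_assoc[symmetric] orthogonal_matrix_cancel_left)
  then have r: "W ** transpose W = diag_mat b" using spectral_decomp_diag[OF assms(2)] by simp
  have "W ** diag_mat a = diag_mat b ** W"
    by (simp flip: c r add: matrix_mul_assoc)
  from intertwining_weighted_sum_eq[OF this, of "\<lambda>x. h x / x"]
  have "(\<Sum>j\<in>UNIV. a $ j * (h (a $ j) / a $ j)) = (\<Sum>i\<in>UNIV. b $ i * (h (b $ i) / b $ i))"
    using arg_cong[OF c, of "\<lambda>M. M $ j $ j" for j] arg_cong[OF r, of "\<lambda>M. M $ i $ i" for i]
    by (simp add: matrix_mult_transpose_dot_column matrix_mult_transpose_dot_row diag_mat_def
        inner_vec_def column_def row_def power2_eq_square)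
  moreover have "x * (h x / x) = h x" for x using assms(3) by (cases "x = 0") simp_all
  ultimately show ?thesis by simp
qed

lemma mat_fun_spectral_decomp:
  assumes "spectral_decomp U d A"
  obtains U' d' where "spectral_decomp U' d' A"
    and "mat_fun f A = U' ** diag_mat (\<chi> i. f (d' $ i)) ** transpose U'"
proof -
  have "\<exists>B U d. orthogonal_matrix U \<and> A = U ** diag_mat d ** transpose U
                \<and> B = U ** diag_mat (\<chi> i. f (d $ i)) ** transpose U"
    using assms unfolding spectral_decomp_def by blast
  from someI_ex[OF this] obtain U' d' where "orthogonal_matrix U'"
    "A = U' ** diag_mat d' ** transpose U'"
    "mat_fun f A = U' ** diag_mat (\<chi> i. f (d' $ i)) ** transpose U'"
    unfolding mat_fun_def[symmetric] by blast
  then show ?thesis by (intro that) (simp_all add: spectral_decomp_def)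
qed

lemma trace_mat_fun:
  assumes "spectral_decomp U d A"
  shows "trace (mat_fun f A) = (\<Sum>i\<in>UNIV. f (d $ i))"
proof -
  obtain U' d' where D: "spectral_decomp U' d' A"
    and "mat_fun f A = U' ** diag_mat (\<chi> i. f (d' $ i)) ** transpose U'"
    using mat_fun_spectral_decomp[OF assms] .
  then have "trace (mat_fun f A) = (\<Sum>i\<in>UNIV. f (d' $ i))"
    by (simp add: spectral_decomp_def trace_orthogonal_conj)
  also have "\<dots> = (\<Sum>i\<in>UNIV. f (d $ i))"
    by (rule spectral_decomp_sum_eq[OF D assms])
  finally show ?thesis .
qed

lemma psd_factor:
  fixes P :: "real^'n^'n"
  assumes "psd P"
  shows "P = factor P ** transpose (factor P)"
proof -
  obtain U p where D: "spectral_decomp U p P"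
    using symmetric_matrix_spectral_decomp assms unfolding psd_def by blast
  define L where "L = U ** diag_mat (\<chi> i. sqrt (p $ i))"
  have "L ** transpose L
      = U ** (diag_mat (\<chi> i. sqrt (p $ i)) ** diag_mat (\<chi> i. sqrt (p $ i))) ** transpose U"
    by (simp add: L_def matrix_transpose_mul matrix_mul_assoc)
  also have "\<dots> = P"
    using D spectral_decomp_psd_nonneg[OF D assms]
    by (simp add: spectral_decomp_def diag_mat_mul_diag_mat vec_eq_iff)
  finally have "P = L ** transpose L" ..
  then show ?thesis
    unfolding factor_def by (rule someI)
qed

section \<open>The scalar function behind gamma\<close>

(* gamma tau P theta is the sum of gamma_scalar tau (theta * p) over the eigenvalues p of P. *)
definition gamma_scalar :: "real \<Rightarrow> real \<Rightarrow> real" where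
  "gamma_scalar \<tau> x =
    (if \<tau> = 0 then ln (1 - x) + 1 / (1 - x) - 1
     else if \<tau> < 1 then
       - (1 / (\<tau> * (1 - \<tau>))) * (1 - (1 - \<tau>) * x) powr (\<tau> / (\<tau> - 1))
       + (1 / (1 - \<tau>)) * (1 - (1 - \<tau>) * x) powr (1 / (\<tau> - 1)) + 1 / \<tau>
     else exp x * (x - 1) + 1)"

definition gamma_scalar_deriv :: "real \<Rightarrow> real \<Rightarrow> real" where
  "gamma_scalar_deriv \<tau> x =
    (if \<tau> < 1 then x * (1 - (1 - \<tau>) * x) powr (1 / (\<tau> - 1) - 1) else x * exp x)"

lemma mult_lt_one_of_le:
  fixes c y z :: real
  shows "0 \<le> c \<Longrightarrow> z \<le> y \<Longrightarrow> c * y < 1 \<Longrightarrow> c * z < 1"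
  by (meson mult_left_mono order_le_less_trans)

lemma gamma_scalar_0:
  assumes "0 \<le> \<tau>" "\<tau> \<le> 1"
  shows "gamma_scalar \<tau> 0 = 0"
proof -
  have "1 / (\<tau> * (1 - \<tau>)) = 1 / (1 - \<tau>) + 1 / \<tau>" if "0 < \<tau>" "\<tau> < 1"
    using that by (simp add: field_simps)
  then show ?thesis using assms by (simp add: gamma_scalar_def)
qed

lemma gamma_scalar_interior_has_derivative:
  assumes "0 < \<tau>" "\<tau> < 1" "(1 - \<tau>) * x < 1"
  shows "(gamma_scalar \<tau> has_real_derivative gamma_scalar_deriv \<tau> x) (at x)"
proof -
  define u where "u = 1 - (1 - \<tau>) * x"
  have u: "0 < u" using assms(3) by (simp add: u_def)
  have du: "((\<lambda>x. 1 - (1 - \<tau>) * x) has_real_derivative - (1 - \<tau>)) (at x)"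
    by (auto intro!: derivative_eq_intros)
  have d: "((\<lambda>x. (1 - (1 - \<tau>) * x) powr r) has_real_derivative r * u powr (r - 1) * - (1 - \<tau>))
      (at x)" for r
    using DERIV_fun_powr[OF du, of r] u by (simp add: u_def)
  have "gamma_scalar \<tau> = (\<lambda>x. - (1 / (\<tau> * (1 - \<tau>))) * (1 - (1 - \<tau>) * x) powr (\<tau> / (\<tau> - 1))
      + (1 / (1 - \<tau>)) * (1 - (1 - \<tau>) * x) powr (1 / (\<tau> - 1)) + 1 / \<tau>)"
    using assms(1,2) by (simp add: gamma_scalar_def fun_eq_iff)
  then have "(gamma_scalar \<tau> has_real_derivative
      - (1 / (\<tau> * (1 - \<tau>))) * ((\<tau> / (\<tau> - 1)) * u powr (\<tau> / (\<tau> - 1) - 1) * - (1 - \<tau>))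
      + (1 / (1 - \<tau>)) * ((1 / (\<tau> - 1)) * u powr (1 / (\<tau> - 1) - 1) * - (1 - \<tau>)) + 0) (at x)"
    by (simp only:) (intro DERIV_add DERIV_cmult d DERIV_const)
  moreover have "\<tau> / (\<tau> - 1) - 1 = (1 / (\<tau> - 1) - 1) + 1"
    using assms(2) by (simp add: field_simps)
  then have "u powr (\<tau> / (\<tau> - 1) - 1) = u powr (1 / (\<tau> - 1) - 1) * u"
    using u by (simp only: powr_add) simp
  moreover have "- (1 / (\<tau> * (1 - \<tau>))) * ((\<tau> / (\<tau> - 1)) * (p * u) * - (1 - \<tau>))
      + (1 / (1 - \<tau>)) * ((1 / (\<tau> - 1)) * p * - (1 - \<tau>)) + 0 = x * p" for p
  proof -
    have "- (1 / (\<tau> * (1 - \<tau>))) * ((\<tau> / (\<tau> - 1)) * (p * u) * - (1 - \<tau>)) = - (p * u) / (1 - \<tau>)"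
      "(1 / (1 - \<tau>)) * ((1 / (\<tau> - 1)) * p * - (1 - \<tau>)) = p / (1 - \<tau>)"
      using assms(1,2) by (simp_all add: divide_simps)
    moreover have "- (p * u) / (1 - \<tau>) + p / (1 - \<tau>) = x * p"
      using assms(2) by (simp add: u_def divide_simps) (simp add: algebra_simps)
    ultimately show ?thesis by linarith
  qed
  ultimately show ?thesis
    using assms(1,2) by (simp add: gamma_scalar_deriv_def u_def)
qed

lemma gamma_scalar_has_derivative:
  assumes "0 \<le> \<tau>" "\<tau> \<le> 1" "(1 - \<tau>) * x < 1"
  shows "(gamma_scalar \<tau> has_real_derivative gamma_scalar_deriv \<tau> x) (at x)"
proof -
  consider "\<tau> = 0" | "0 < \<tau>" "\<tau> < 1" | "\<tau> = 1" using assms(1,2) by linarith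
  then show ?thesis
  proof cases
    case 1
    then have x: "x < 1" using assms(3) by simp
    have "gamma_scalar \<tau> = (\<lambda>x. ln (1 - x) + 1 / (1 - x) - 1)"
      using 1 by (simp add: gamma_scalar_def fun_eq_iff)
    moreover have "((\<lambda>x. ln (1 - x) + 1 / (1 - x) - 1) has_real_derivative
        inverse (1 - x) * (0 - 1) + (- (0 - 1) / (1 - x)\<^sup>2) - 0) (at x)"
      using x by (auto intro!: derivative_eq_intros simp: power2_eq_square inverse_eq_divide)
    moreover have "inverse (1 - x) * (0 - 1) + (- (0 - 1) / (1 - x)\<^sup>2) - 0 = x / (1 - x)\<^sup>2"
      using x by (simp add: divide_simps) (simp add: algebra_simps power2_eq_square)
    moreover have "(1 - x) powr - 2 = 1 / (1 - x)\<^sup>2"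
      using x by (simp add: powr_minus_divide)
    ultimately show ?thesis using 1 by (simp add: gamma_scalar_deriv_def)
  next
    case 2
    then show ?thesis using assms(3) by (rule gamma_scalar_interior_has_derivative)
  next
    case 3
    then have "gamma_scalar \<tau> = (\<lambda>x. exp x * (x - 1) + 1)"
      by (simp add: gamma_scalar_def fun_eq_iff)
    moreover have "((\<lambda>x. exp x * (x - 1) + 1) has_real_derivative x * exp x) (at x)"
      by (auto intro!: derivative_eq_intros simp: algebra_simps)
    ultimately show ?thesis using 3 by (simp add: gamma_scalar_deriv_def)
  qed
qed

lemma gamma_scalar_deriv_mono:
  assumes "0 \<le> \<tau>" "\<tau> \<le> 1" "0 \<le> x" "x \<le> y" "(1 - \<tau>) * y < 1"
  shows "gamma_scalar_deriv \<tau> x \<le> gamma_scalar_deriv \<tau> y"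
proof (cases "\<tau> < 1")
  case True
  have "(1 - \<tau>) * x \<le> (1 - \<tau>) * y" using assms by (intro mult_left_mono) auto
  moreover have "1 / (\<tau> - 1) - 1 \<le> 0" using True by (simp add: divide_simps)
  ultimately have "(1 - (1 - \<tau>) * x) powr (1 / (\<tau> - 1) - 1) \<le> (1 - (1 - \<tau>) * y) powr (1 / (\<tau> - 1) - 1)"
    using assms(5) by (intro powr_mono2') auto
  then show ?thesis
    using True assms(3,4) unfolding gamma_scalar_deriv_def by (auto intro!: mult_mono')
next
  case False
  then show ?thesis using assms(3,4) unfolding gamma_scalar_deriv_def by (auto intro!: mult_mono')
qed

lemma gamma_scalar_deriv_nonneg:
  assumes "0 \<le> x"
  shows "0 \<le> gamma_scalar_deriv \<tau> x"
  unfolding gamma_scalar_deriv_def using assms by simp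

lemma gamma_scalar_deriv_pos:
  assumes "0 < x" "(1 - \<tau>) * x < 1"
  shows "0 < gamma_scalar_deriv \<tau> x"
  unfolding gamma_scalar_deriv_def using assms by simp

lemma gamma_scalar_mono:
  assumes "0 \<le> \<tau>" "\<tau> \<le> 1" "0 \<le> x" "x \<le> y" "(1 - \<tau>) * y < 1"
  shows "gamma_scalar \<tau> x \<le> gamma_scalar \<tau> y"
proof (rule DERIV_nonneg_imp_nondecreasing[OF assms(4)])
  fix z assume z: "x \<le> z" "z \<le> y"
  have dom: "(1 - \<tau>) * z < 1" using assms(2) by (intro mult_lt_one_of_le[OF _ z(2) assms(5)]) simp
  have "0 \<le> z" using assms(3) z(1) by linarith
  then show "\<exists>d. (gamma_scalar \<tau> has_real_derivative d) (at z) \<and> 0 \<le> d"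
    using gamma_scalar_has_derivative[OF assms(1,2) dom] gamma_scalar_deriv_nonneg by blast
qed

lemma gamma_scalar_nonneg:
  assumes "0 \<le> \<tau>" "\<tau> \<le> 1" "0 \<le> x" "(1 - \<tau>) * x < 1"
  shows "0 \<le> gamma_scalar \<tau> x"
  using gamma_scalar_mono[OF assms(1,2) order_refl assms(3,4)] gamma_scalar_0[OF assms(1,2)] by simp

lemma gamma_scalar_pos:
  assumes "0 \<le> \<tau>" "\<tau> \<le> 1" "0 < x" "(1 - \<tau>) * x < 1"
  shows "0 < gamma_scalar \<tau> x"
proof -
  have dom: "(1 - \<tau>) * z < 1" if "z \<le> x" for z
    using assms(2) by (intro mult_lt_one_of_le[OF _ that assms(4)]) simp
  have "gamma_scalar \<tau> 0 < gamma_scalar \<tau> x"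
  proof (rule DERIV_pos_imp_increasing_open[OF assms(3)])
    fix z :: real assume z: "0 < z" "z < x"
    then have "(1 - \<tau>) * z < 1" by (intro dom) simp
    then show "\<exists>d. (gamma_scalar \<tau> has_real_derivative d) (at z) \<and> 0 < d"
      using gamma_scalar_has_derivative[OF assms(1,2)] gamma_scalar_deriv_pos[OF z(1)] by blast
  next
    show "continuous_on {0..x} (gamma_scalar \<tau>)"
      by (rule DERIV_atLeastAtMost_imp_continuous_on)
        (use gamma_scalar_has_derivative[OF assms(1,2) dom] in auto)
  qed
  then show ?thesis using gamma_scalar_0[OF assms(1,2)] by simp
qed

lemma gamma_scalar_scaled_convex_on:
  assumes "0 \<le> \<tau>" "\<tau> \<le> 1" "0 < \<theta>" "(1 - \<tau>) * (\<theta> * R) < 1"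
  shows "convex_on {0..R} (\<lambda>x. gamma_scalar \<tau> (\<theta> * x))"
proof (rule convex_on_realI[where f'="\<lambda>x. gamma_scalar_deriv \<tau> (\<theta> * x) * \<theta>"])
  have dom: "(1 - \<tau>) * (\<theta> * x) < 1" if "x \<le> R" for x
    using assms(2,3) that by (intro mult_lt_one_of_le[OF _ _ assms(4)] mult_left_mono) simp_all
  show "((\<lambda>x. gamma_scalar \<tau> (\<theta> * x)) has_real_derivative gamma_scalar_deriv \<tau> (\<theta> * x) * \<theta>) (at x)"
    if "x \<in> {0..R}" for x
  proof (rule DERIV_chain2[of "gamma_scalar \<tau>"])
    show "(gamma_scalar \<tau> has_real_derivative gamma_scalar_deriv \<tau> (\<theta> * x)) (at (\<theta> * x))"
      using that by (intro gamma_scalar_has_derivative assms(1,2) dom) simp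
  qed (rule DERIV_cmult_Id)
  show "gamma_scalar_deriv \<tau> (\<theta> * x) * \<theta> \<le> gamma_scalar_deriv \<tau> (\<theta> * y) * \<theta>"
    if "x \<in> {0..R}" "y \<in> {0..R}" "x \<le> y" for x y
  proof (rule mult_right_mono)
    show "gamma_scalar_deriv \<tau> (\<theta> * x) \<le> gamma_scalar_deriv \<tau> (\<theta> * y)"
      using that assms(1-3) dom[of y] by (intro gamma_scalar_deriv_mono mult_left_mono) simp_all
  qed (use assms(3) in simp)
qed simp

section \<open>Gamma as a spectral sum\<close>

lemma gamma_0_eq_sum:
  fixes P :: "real^'n^'n"
  assumes D: "spectral_decomp U p P" and lt: "\<And>j. \<theta> * p $ j < 1"
  shows "gamma 0 P \<theta> = (\<Sum>j\<in>UNIV. gamma_scalar 0 (\<theta> * p $ j))"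
proof -
  have U: "orthogonal_matrix U" using D by (rule spectral_decomp_orthogonal)
  define m :: "real^'n" where "m = (\<chi> i. 1 + (- \<theta>) * p $ i)"
  have m: "0 < m $ i" for i using lt[of i] by (simp add: m_def)
  then have m0: "m $ i \<noteq> 0" for i by (metis less_irrefl)
  have "mat 1 - \<theta> *\<^sub>R P = U ** diag_mat m ** transpose U"
    using spectral_decomp_affine[OF D, of 1 "- \<theta>"] by (simp add: spectral_decomp_def m_def)
  then have inv: "matrix_inv (mat 1 - \<theta> *\<^sub>R P) = U ** diag_mat (\<chi> i. 1 / m $ i) ** transpose U"
    by (simp add: matrix_inv_orthogonal_conj[OF U] m0)
  have "ln (det (matrix_inv (mat 1 - \<theta> *\<^sub>R P))) = ln (\<Prod>i\<in>UNIV. 1 / m $ i)"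
    unfolding inv det_orthogonal_conj[OF U] by simp
  also have "\<dots> = (\<Sum>i\<in>UNIV. ln (1 / m $ i))"
    by (intro ln_prod) (simp_all add: m m0)
  moreover have "trace (matrix_inv (mat 1 - \<theta> *\<^sub>R P) - mat 1) = (\<Sum>i\<in>UNIV. 1 / m $ i - 1)"
    unfolding inv by (simp add: trace_sub trace_orthogonal_conj[OF U] trace_I sum_subtractf)
  moreover have "ln (1 / m $ i) = - ln (m $ i)" for i
    using m[of i] by (simp add: ln_div)
  ultimately show ?thesis
    by (simp add: gamma_def gamma_scalar_def m_def sum_negf sum.distrib[symmetric] add_diff_eq)
qed

lemma gamma_interior_eq_sum:
  fixes P :: "real^'n^'n"
  assumes "0 < \<tau>" "\<tau> < 1" and D: "spectral_decomp U k (transpose (factor P) ** factor P)"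
  shows "gamma \<tau> P \<theta> = (\<Sum>j\<in>UNIV. gamma_scalar \<tau> (\<theta> * k $ j))"
proof -
  define M where "M = mat 1 - (\<theta> * (1 - \<tau>)) *\<^sub>R (transpose (factor P) ** factor P)"
  define m :: "real^'n" where "m = (\<chi> i. 1 + (- (\<theta> * (1 - \<tau>))) * k $ i)"
  define f1 where "f1 x = x powr (\<tau> / (\<tau> - 1))" for x :: real
  define f2 where "f2 x = x powr (1 / (\<tau> - 1))" for x :: real
  have DM: "spectral_decomp U m M"
    using spectral_decomp_affine[OF D, of 1 "- (\<theta> * (1 - \<tau>))"] by (simp add: M_def m_def)
  have "gamma \<tau> P \<theta> = trace (- (1 / (\<tau> * (1 - \<tau>))) *\<^sub>R mat_fun f1 M
      + (1 / (1 - \<tau>)) *\<^sub>R mat_fun f2 M + (1 / \<tau>) *\<^sub>R mat 1)"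
    using assms(1,2) by (simp add: gamma_def Let_def M_def f1_def[abs_def] f2_def[abs_def])
  also have "\<dots> = (\<Sum>i\<in>UNIV. - (1 / (\<tau> * (1 - \<tau>))) * f1 (m $ i)
      + (1 / (1 - \<tau>)) * f2 (m $ i) + 1 / \<tau>)"
    by (simp add: trace_add trace_sub trace_scaleR trace_mat_fun[OF DM] trace_I sum.distrib
        sum_subtractf sum_distrib_left)
  also have "\<dots> = (\<Sum>j\<in>UNIV. gamma_scalar \<tau> (\<theta> * k $ j))"
    using assms(1,2) by (intro sum.cong) (simp_all add: gamma_scalar_def m_def f1_def f2_def algebra_simps)
  finally show ?thesis .
qed

lemma gamma_1_eq_sum:
  fixes P :: "real^'n^'n"
  assumes D: "spectral_decomp U k (transpose (factor P) ** factor P)"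
  shows "gamma 1 P \<theta> = (\<Sum>j\<in>UNIV. gamma_scalar 1 (\<theta> * k $ j))"
proof -
  define K where "K = \<theta> *\<^sub>R (transpose (factor P) ** factor P)"
  have DK: "spectral_decomp U (\<chi> i. 0 + \<theta> * k $ i) K"
    using spectral_decomp_affine[OF D, of 0 \<theta>] by (simp add: K_def)
  \<comment> \<open>mat_fun uses its own choice of eigendecomposition of K\<close>
  obtain V d where DV: "spectral_decomp V d K"
    and E: "mat_fun exp K = V ** diag_mat (\<chi> i. exp (d $ i)) ** transpose V"
    using mat_fun_spectral_decomp[OF DK] .
  have V: "orthogonal_matrix V" using DV by (rule spectral_decomp_orthogonal)
  have "K - mat 1 = V ** diag_mat (\<chi> i. - 1 + 1 * d $ i) ** transpose V"
    using spectral_decomp_affine[OF DV, of "- 1" 1] unfolding spectral_decomp_def by simp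
  then have "mat_fun exp K ** (K - mat 1)
      = V ** diag_mat (\<chi> i. exp (d $ i) * (- 1 + 1 * d $ i)) ** transpose V"
    by (simp only: E orthogonal_conj_mul[OF V]) simp
  then have "gamma 1 P \<theta> = (\<Sum>i\<in>UNIV. gamma_scalar 1 (d $ i))"
    by (simp add: gamma_def Let_def K_def[symmetric] trace_add trace_orthogonal_conj[OF V] trace_I
        gamma_scalar_def sum.distrib sum_subtractf algebra_simps)
  also have "\<dots> = (\<Sum>i\<in>UNIV. gamma_scalar 1 ((\<chi> i. 0 + \<theta> * k $ i) $ i))"
    by (rule spectral_decomp_sum_eq[OF DV DK])
  finally show ?thesis by simp
qed

lemma gamma_eq_spectral_sum:
  fixes P :: "real^'n^'n"
  assumes "0 \<le> \<tau>" "\<tau> \<le> 1" "psd P" and D: "spectral_decomp U p P"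
    and dom: "\<And>j. (1 - \<tau>) * (\<theta> * p $ j) < 1"
  shows "gamma \<tau> P \<theta> = (\<Sum>j\<in>UNIV. gamma_scalar \<tau> (\<theta> * p $ j))"
proof (cases "\<tau> = 0")
  case True
  then show ?thesis using gamma_0_eq_sum[OF D] dom by simp
next
  case False
  define L where "L = factor P"
  have "transpose (transpose L ** L) = transpose L ** L" by (simp add: matrix_transpose_mul)
  then obtain V k where DV: "spectral_decomp V k (transpose L ** L)"
    by (rule symmetric_matrix_spectral_decomp)
  have "gamma \<tau> P \<theta> = (\<Sum>j\<in>UNIV. gamma_scalar \<tau> (\<theta> * k $ j))"
  proof (cases "\<tau> < 1")
    case True
    with False assms(1) show ?thesis using gamma_interior_eq_sum[of \<tau> V k P] DV by (simp add: L_def)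
  next
    case False
    with assms(2) have "\<tau> = 1" by simp
    then show ?thesis using gamma_1_eq_sum[of V k P] DV by (simp add: L_def)
  qed
  also have "\<dots> = (\<Sum>j\<in>UNIV. gamma_scalar \<tau> (\<theta> * p $ j))"
    using spectral_decomp_sum_transpose_mul[OF DV, of U p "\<lambda>x. gamma_scalar \<tau> (\<theta> * x)"]
      D psd_factor[OF assms(3)] gamma_scalar_0[OF assms(1,2)] by (simp add: L_def)
  finally show ?thesis .
qed

section \<open>Monotonicity, Loewner monotonicity and positivity\<close>

lemma loewner_eigenvalue_le_mixture:
  fixes P Q :: "real^'n^'n"
  assumes DP: "spectral_decomp U p P" and DQ: "spectral_decomp V q Q" and PQ: "psd (P - Q)"
  shows "q $ i \<le> (\<Sum>j\<in>UNIV. ((transpose V ** U) $ i $ j)\<^sup>2 * p $ j)"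
proof -
  define W where "W = transpose V ** U"
  have "transpose V ** P ** V = W ** diag_mat p ** transpose W"
    using DP by (simp add: spectral_decomp_def W_def matrix_transpose_mul matrix_mul_assoc)
  then have "column i V \<bullet> (P *v column i V) = (\<Sum>j\<in>UNIV. (W $ i $ j)\<^sup>2 * p $ j)"
    using transpose_mul_mul_diag_nth[of V P i]
    by (simp add: orthogonal_conj_nth power2_eq_square mult_ac)
  moreover have "0 \<le> column i V \<bullet> ((P - Q) *v column i V)"
    using PQ by (simp add: psd_def)
  ultimately show ?thesis
    using spectral_decomp_eigenvalue[OF DQ, of i]
    by (simp add: W_def matrix_vector_mult_diff_rdistrib inner_diff_right)
qed

lemma orthogonal_matrix_mixture_le:
  fixes W :: "real^'n^'n"
  assumes "orthogonal_matrix W" "\<And>j. p $ j \<le> R"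
  shows "(\<Sum>j\<in>UNIV. (W $ i $ j)\<^sup>2 * p $ j) \<le> R"
proof -
  have "(\<Sum>j\<in>UNIV. (W $ i $ j)\<^sup>2 * p $ j) \<le> (\<Sum>j\<in>UNIV. (W $ i $ j)\<^sup>2 * R)"
    using assms(2) by (intro sum_mono mult_left_mono) auto
  also have "\<dots> = R"
    using orthogonal_matrix_row_sum_squares[OF assms(1)] by (simp flip: sum_distrib_right)
  finally show ?thesis .
qed

lemma loewner_eigenvalue_le:
  fixes P Q :: "real^'n^'n"
  assumes "spectral_decomp U p P" "spectral_decomp V q Q" "psd (P - Q)" "\<And>j. p $ j \<le> R"
  shows "q $ i \<le> R"
  using loewner_eigenvalue_le_mixture[OF assms(1-3), of i]
    orthogonal_matrix_mixture_le[OF _ assms(4)] assms(1,2)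
  by (meson order_trans orthogonal_matrix_mul orthogonal_matrix_transpose spectral_decomp_orthogonal)

lemma spectral_sum_mono_loewner:
  fixes P Q :: "real^'n^'n" and f :: "real \<Rightarrow> real"
  assumes DP: "spectral_decomp U p P" and DQ: "spectral_decomp V q Q" and PQ: "psd (P - Q)"
    and p: "\<And>j. 0 \<le> p $ j" "\<And>j. p $ j \<le> R" and q: "\<And>i. 0 \<le> q $ i"
    and mono: "\<And>x y. 0 \<le> x \<Longrightarrow> x \<le> y \<Longrightarrow> y \<le> R \<Longrightarrow> f x \<le> f y"
    and conv: "convex_on {0..R} f"
  shows "(\<Sum>i\<in>UNIV. f (q $ i)) \<le> (\<Sum>j\<in>UNIV. f (p $ j))"
proof -
  define W where "W = transpose V ** U"
  have W: "orthogonal_matrix W"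
    using DP DQ by (simp add: W_def orthogonal_matrix_mul spectral_decomp_orthogonal)
  have "f (q $ i) \<le> (\<Sum>j\<in>UNIV. (W $ i $ j)\<^sup>2 * f (p $ j))" for i
  proof -
    have "f (q $ i) \<le> f (\<Sum>j\<in>UNIV. (W $ i $ j)\<^sup>2 * p $ j)"
      using loewner_eigenvalue_le_mixture[OF DP DQ PQ, of i] orthogonal_matrix_mixture_le[OF W p(2)]
      by (intro mono q) (simp_all add: W_def)
    also have "\<dots> \<le> (\<Sum>j\<in>UNIV. (W $ i $ j)\<^sup>2 * f (p $ j))"
      using convex_on_sum[OF _ _ conv orthogonal_matrix_row_sum_squares[OF W], where y="\<lambda>j. p $ j"]
        p by simp
    finally show ?thesis .
  qed
  then have "(\<Sum>i\<in>UNIV. f (q $ i)) \<le> (\<Sum>i\<in>UNIV. \<Sum>j\<in>UNIV. (W $ i $ j)\<^sup>2 * f (p $ j))"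
    by (intro sum_mono)
  also have "\<dots> = (\<Sum>j\<in>UNIV. f (p $ j))"
    by (subst sum.swap) (simp add: orthogonal_matrix_column_sum_squares[OF W] flip: sum_distrib_right)
  finally show ?thesis .
qed

lemma spectral_decomp_scaled_dom:
  assumes "spectral_decomp U p P" "\<tau> \<le> 1" "0 \<le> t" "t * (1 - \<tau>) * spec_norm P < 1"
  shows "(1 - \<tau>) * (t * p $ j) < 1"
proof -
  have "p $ j \<le> spec_norm P"
    using spectral_decomp_abs_le_spec_norm[OF assms(1), of j] by linarith
  then have "(t * (1 - \<tau>)) * p $ j \<le> (t * (1 - \<tau>)) * spec_norm P"
    using assms(2,3) by (intro mult_left_mono) auto
  with assms(4) show ?thesis by (simp add: mult_ac)
qed

lemma gamma_mono_param:
  fixes P :: "real^'n^'n"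
  assumes "0 \<le> \<tau>" "\<tau> \<le> 1" "psd P" "0 < s" "s \<le> t" "t * (1 - \<tau>) * spec_norm P < 1"
  shows "gamma \<tau> P s \<le> gamma \<tau> P t"
proof -
  obtain U p where D: "spectral_decomp U p P"
    using symmetric_matrix_spectral_decomp assms(3) unfolding psd_def by blast
  have p: "0 \<le> p $ j" for j by (rule spectral_decomp_psd_nonneg[OF D assms(3)])
  have st: "s * p $ j \<le> t * p $ j" for j using assms(5) p by (rule mult_right_mono)
  have dom_t: "(1 - \<tau>) * (t * p $ j) < 1" for j
    using spectral_decomp_scaled_dom[OF D assms(2) _ assms(6)] assms(4,5) by simp
  have dom_s: "(1 - \<tau>) * (s * p $ j) < 1" for j
    using assms(2) by (intro mult_lt_one_of_le[OF _ st dom_t]) simp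
  have "gamma \<tau> P s = (\<Sum>j\<in>UNIV. gamma_scalar \<tau> (s * p $ j))"
    by (rule gamma_eq_spectral_sum[OF assms(1-3) D dom_s])
  also have "\<dots> \<le> (\<Sum>j\<in>UNIV. gamma_scalar \<tau> (t * p $ j))"
    using assms(4) p by (intro sum_mono gamma_scalar_mono assms(1,2) st dom_t) simp
  also have "\<dots> = gamma \<tau> P t"
    by (rule gamma_eq_spectral_sum[OF assms(1-3) D dom_t, symmetric])
  finally show ?thesis .
qed

lemma gamma_mono_loewner:
  fixes P Q :: "real^'n^'n"
  assumes "0 \<le> \<tau>" "\<tau> \<le> 1" "psd P" "psd Q" "loewner_ge P Q"
    and "0 < \<theta>" "\<theta> * (1 - \<tau>) * spec_norm P < 1"
  shows "gamma \<tau> Q \<theta> \<le> gamma \<tau> P \<theta>"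
proof -
  obtain U p where DP: "spectral_decomp U p P"
    using symmetric_matrix_spectral_decomp assms(3) unfolding psd_def by blast
  obtain V q where DQ: "spectral_decomp V q Q"
    using symmetric_matrix_spectral_decomp assms(4) unfolding psd_def by blast
  have PQ: "psd (P - Q)" using assms(5) by (simp add: loewner_ge_def)
  have p: "0 \<le> p $ j" "p $ j \<le> spec_norm P" for j
    using spectral_decomp_psd_nonneg[OF DP assms(3)] spectral_decomp_abs_le_spec_norm[OF DP, of j]
    by simp_all
  have q: "0 \<le> q $ i" "q $ i \<le> spec_norm P" for i
    by (rule spectral_decomp_psd_nonneg[OF DQ assms(4)], rule loewner_eigenvalue_le[OF DP DQ PQ p(2)])
  have dom: "(1 - \<tau>) * (\<theta> * x) < 1" if "x \<le> spec_norm P" for x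
  proof (rule mult_lt_one_of_le)
    show "\<theta> * x \<le> \<theta> * spec_norm P" using that assms(6) by simp
    show "(1 - \<tau>) * (\<theta> * spec_norm P) < 1" using assms(7) by (simp add: mult_ac)
  qed (use assms(2) in simp)
  have "gamma \<tau> Q \<theta> = (\<Sum>i\<in>UNIV. gamma_scalar \<tau> (\<theta> * q $ i))"
    by (rule gamma_eq_spectral_sum[OF assms(1,2,4) DQ dom[OF q(2)]])
  also have "\<dots> \<le> (\<Sum>j\<in>UNIV. gamma_scalar \<tau> (\<theta> * p $ j))"
  proof (rule spectral_sum_mono_loewner[OF DP DQ PQ p q(1)])
    show "gamma_scalar \<tau> (\<theta> * x) \<le> gamma_scalar \<tau> (\<theta> * y)"
      if "0 \<le> x" "x \<le> y" "y \<le> spec_norm P" for x y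
      using that assms(1,2,6) by (intro gamma_scalar_mono dom) simp_all
    show "convex_on {0..spec_norm P} (\<lambda>x. gamma_scalar \<tau> (\<theta> * x))"
      using assms(1,2,6) dom[OF order_refl] by (rule gamma_scalar_scaled_convex_on)
  qed
  also have "\<dots> = gamma \<tau> P \<theta>"
    by (rule gamma_eq_spectral_sum[OF assms(1-3) DP dom[OF p(2)], symmetric])
  finally show ?thesis .
qed

lemma gamma_pos:
  fixes P :: "real^'n^'n"
  assumes "0 \<le> \<tau>" "\<tau> \<le> 1" "psd P" "P \<noteq> 0"
    and "0 < \<theta>" "\<theta> * (1 - \<tau>) * spec_norm P < 1"
  shows "0 < gamma \<tau> P \<theta>"
proof -
  obtain U p where D: "spectral_decomp U p P"
    using symmetric_matrix_spectral_decomp assms(3) unfolding psd_def by blast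
  have p: "0 \<le> p $ j" for j by (rule spectral_decomp_psd_nonneg[OF D assms(3)])
  have dom: "(1 - \<tau>) * (\<theta> * p $ j) < 1" for j
    using spectral_decomp_scaled_dom[OF D assms(2) _ assms(6)] assms(5) by simp
  have "\<exists>j. p $ j \<noteq> 0"
  proof (rule ccontr)
    assume "\<nexists>j. p $ j \<noteq> 0"
    then have "diag_mat p = 0" by (simp add: diag_mat_def vec_eq_iff)
    then show False using D assms(4) by (simp add: spectral_decomp_def)
  qed
  then obtain j where "p $ j \<noteq> 0" ..
  with p have "0 < \<theta> * p $ j" using assms(5) by (simp add: order_less_le)
  then have "0 < gamma_scalar \<tau> (\<theta> * p $ j)"
    by (rule gamma_scalar_pos[OF assms(1,2) _ dom])
  also have "\<dots> \<le> (\<Sum>i\<in>UNIV. gamma_scalar \<tau> (\<theta> * p $ i))"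
    using assms(5) p by (intro member_le_sum gamma_scalar_nonneg assms(1,2) dom) simp_all
  also have "\<dots> = gamma \<tau> P \<theta>"
    by (rule gamma_eq_spectral_sum[OF assms(1-3) D dom, symmetric])
  finally show ?thesis .
qed

theorem lemma4:
  fixes P :: "real^'n^'n" and \<tau> \<theta> :: real
  assumes "0 \<le> \<tau>" "\<tau> \<le> 1"
    and "psd P"
    and "0 < \<theta>" "\<theta> * (1 - \<tau>) * spec_norm P < 1"
  shows "(\<forall>s t. 0 < s \<and> s \<le> t \<and> t * (1 - \<tau>) * spec_norm P < 1
            \<longrightarrow> gamma \<tau> P s \<le> gamma \<tau> P t)
       \<and> (\<forall>Q :: real^'n^'n. psd Q \<and> loewner_ge P Q \<longrightarrow> gamma \<tau> Q \<theta> \<le> gamma \<tau> P \<theta>)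
       \<and> (P \<noteq> 0 \<longrightarrow> 0 < gamma \<tau> P \<theta>)"
  using gamma_mono_param[OF assms(1-3)] gamma_mono_loewner[OF assms(1-3) _ _ assms(4,5)]
    gamma_pos[OF assms(1-3) _ assms(4,5)]
  by blast

end
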